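(* Fix a sensor index $k$, integers $N\ge1$, $B_k\ge1$, $\Delta^{\max}\ge2$, probabilities $p_{k,1},\dots,p_{k,N}\in[0,1]$, $\lambda_k\in[0,1]$, and any $\mu\ge0$. Let $\mathcal{S}_k=\{0,\dots,N\}\times\{0,\dots,B_k\}\times\{1,\dots,\Delta^{\max}\}$, $\mathcal{A}_k=\{0,1\}$, $c_k(s,a)=r\min\{(1-a\mathbf{1}\{b\ge1\})\Delta+1,\Delta^{\max}\}$ for $s=(r,b,\Delta)$, and let $\Pr(s'\mid s,a)$ be the transition probabilities defined as follows for $s'=(r',b',\Delta')$: $r'$ is distributed as $\sum_{n=1}^N X_n$ with independent $X_n\sim$ Bernoulli$(p_{k,n})$, independently of everything else; $b'=\min\{b+e-a\mathbf{1}\{b\ge1\},B_k\}$ with $e\sim$ Bernoulli$(\lambda_k)$ independent; $\Delta'=\min\{(1-a\mathbf{1}\{b\ge1\})\Delta+1,\Delta^{\max}\}$. Fix $s_{\mathrm{ref}}\in\mathcal{S}_k$, set $V^{(0)}\equiv0$, $h^{(0)}\equiv0$, and for $i\ge0$ let $V^{(i+1)}(s)=\min_{a\in\mathcal{A}_k}\big[c_k(s,a)+\mu a+\sum_{s'}\Pr(s'\mid s,a)h^{(i)}(s')\big]$, $h^{(i+1)}(s)=V^{(i+1)}(s)-V^{(i+1)}(s_{\mathrm{ref}})$; let $V=\lim_i V^{(i)}$, $h(s)=V(s)-V(s_{\mathrm{ref}})$, and $Q(s,a)=c_k(s,a)+\mu a+\sum_{s'\in\mathcal{S}_k}\Pr(s'\mid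 s,a)h(s')$. Let $\pi$ be a policy obtained from this procedure, i.e. $\pi(s)\in\arg\min_{a\in\mathcal{A}_k}Q(s,a)$ for all $s$. Then $\pi$ has a threshold structure with respect to the AoI: if the action $1$ is optimal in state $s=(r,b,\Delta)$ (i.e. $\pi(s)=1$), then for every state $\bar s=(r,b,\bar\Delta)\in\mathcal{S}_k$ with $\bar\Delta\ge\Delta$ the action $1$ is also optimal, i.e. $Q(\bar s,1)\le Q(\bar s,0)$.
   Context: The limit $V$ of the relative value iteration is assumed to exist. *)

theory Defs
  imports "HOL-Analysis.Analysis"
begin

type_synonym state = "nat \<times> nat \<times> nat"  (* (r, b, Delta) *)

definition states :: "nat \<Rightarrow> nat \<Rightarrow> nat \<Rightarrow> state set" where
  "states N B Dmax = {0..N} \<times> {0..B} \<times> {1..Dmax}"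

definition acts :: "nat set" where
  "acts = {0, 1}"

definition ind_pos :: "nat \<Rightarrow> nat" where
  "ind_pos b = (if b \<ge> 1 then 1 else 0)"

definition next_aoi :: "nat \<Rightarrow> state \<Rightarrow> nat \<Rightarrow> nat" where
  "next_aoi Dmax s a = (case s of (r, b, d) \<Rightarrow> min ((1 - a * ind_pos b) * d + 1) Dmax)"

definition cost :: "nat \<Rightarrow> state \<Rightarrow> nat \<Rightarrow> real" where
  "cost Dmax s a = (case s of (r, b, d) \<Rightarrow> real r * real (next_aoi Dmax s a))"

(* Poisson-binomial pmf: probability that sum of independent Bernoulli(p n), n = 1..N, equals j *)
definition prob_r :: "nat \<Rightarrow> (nat \<Rightarrow> real) \<Rightarrow> nat \<Rightarrow> real" where
  "prob_r N p j = (\<Sum>T\<in>{T. T \<subseteq> {1..N} \<and> card T = j}.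
      (\<Prod>n\<in>T. p n) * (\<Prod>n\<in>{1..N} - T. 1 - p n))"

definition prob_b :: "nat \<Rightarrow> real \<Rightarrow> nat \<Rightarrow> nat \<Rightarrow> nat \<Rightarrow> real" where
  "prob_b B lam b a b' = (\<Sum>e\<in>{0::nat, 1}. (if e = 1 then lam else 1 - lam) *
      (if b' = min (b + e - a * ind_pos b) B then 1 else 0))"

definition trans :: "nat \<Rightarrow> nat \<Rightarrow> nat \<Rightarrow> (nat \<Rightarrow> real) \<Rightarrow> real \<Rightarrow> state \<Rightarrow> nat \<Rightarrow> state \<Rightarrow> real" where
  "trans N B Dmax p lam s a s' = (case s of (r, b, d) \<Rightarrow> case s' of (r', b', d') \<Rightarrow>
      prob_r N p r' * prob_b B lam b a b' * (if d' = next_aoi Dmax s a then 1 else 0))"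

fun rvi :: "nat \<Rightarrow> nat \<Rightarrow> nat \<Rightarrow> (nat \<Rightarrow> real) \<Rightarrow> real \<Rightarrow> real \<Rightarrow> state \<Rightarrow> nat
            \<Rightarrow> (state \<Rightarrow> real) \<times> (state \<Rightarrow> real)" where
  "rvi N B Dmax p lam \<mu> sref 0 = (\<lambda>_. 0, \<lambda>_. 0)"
| "rvi N B Dmax p lam \<mu> sref (Suc i) =
     (let h = snd (rvi N B Dmax p lam \<mu> sref i);
          V = (\<lambda>s. Min ((\<lambda>a. cost Dmax s a + \<mu> * real a +
                   (\<Sum>s'\<in>states N B Dmax. trans N B Dmax p lam s a s' * h s')) ` acts))
      in (V, \<lambda>s. V s - V sref))"

definition Qfun :: "nat \<Rightarrow> nat \<Rightarrow> nat \<Rightarrow> (nat \<Rightarrow> real) \<Rightarrow> real \<Rightarrow> real \<Rightarrow> state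
                    \<Rightarrow> (state \<Rightarrow> real) \<Rightarrow> state \<Rightarrow> nat \<Rightarrow> real" where
  "Qfun N B Dmax p lam \<mu> sref V s a = cost Dmax s a + \<mu> * real a +
      (\<Sum>s'\<in>states N B Dmax. trans N B Dmax p lam s a s' * (V s' - V sref))"

end

theory Submission
  imports Defs
begin

(* The AoI component of a state influences the Q-value only through the next AoI
   min((1 - a 1{b >= 1}) Delta + 1, Dmax), which is nondecreasing in Delta; so by induction every
   value iterate, and hence its limit V, is nondecreasing in Delta. If the buffer is nonempty,
   transmitting resets the AoI, so Q(s,1) does not depend on Delta while Q(s,0) is nondecreasing
   in it. If the buffer is empty, transmitting has no effect and Q(s,1) = Q(s,0) + mu, so
   optimality of transmitting at one such state forces mu = 0. *)

definition mono_aoi :: "nat \<Rightarrow> nat \<Rightarrow> nat \<Rightarrow> (state \<Rightarrow> real) \<Rightarrow> bool" where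
  "mono_aoi N B Dmax g \<longleftrightarrow> (\<forall>r b d1 d2. (r, b, d1) \<in> states N B Dmax \<longrightarrow>
      (r, b, d2) \<in> states N B Dmax \<longrightarrow> d1 \<le> d2 \<longrightarrow> g (r, b, d1) \<le> g (r, b, d2))"

lemma prob_r_nonneg:
  assumes "\<forall>n\<in>{1..N}. 0 \<le> p n \<and> p n \<le> 1"
  shows "0 \<le> prob_r N p j"
  unfolding prob_r_def using assms
  by (intro sum_nonneg mult_nonneg_nonneg prod_nonneg) auto

lemma prob_b_nonneg:
  assumes "0 \<le> lam" "lam \<le> 1"
  shows "0 \<le> prob_b B lam b a b'"
  unfolding prob_b_def using assms by (intro sum_nonneg) auto

lemma next_aoi_in_range:
  assumes "Dmax \<ge> 1"
  shows "next_aoi Dmax s a \<in> {1..Dmax}"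
  using assms by (auto simp: next_aoi_def split: prod.splits)

lemma next_aoi_mono:
  assumes "d1 \<le> d2"
  shows "next_aoi Dmax (r, b, d1) a \<le> next_aoi Dmax (r, b, d2) a"
  unfolding next_aoi_def prod.case using assms by (intro min.mono add_right_mono mult_le_mono2) auto

lemma next_aoi_transmit:
  assumes "b \<ge> 1" "Dmax \<ge> 1"
  shows "next_aoi Dmax (r, b, d) 1 = 1"
  using assms by (simp add: next_aoi_def ind_pos_def)

lemma next_aoi_empty_buffer:
  "next_aoi Dmax (r, 0, d) a = next_aoi Dmax (r, 0, d) 0"
  by (simp add: next_aoi_def ind_pos_def)

lemma sum_trans_mult:
  assumes "Dmax \<ge> 1"
  shows "(\<Sum>s'\<in>states N B Dmax. trans N B Dmax p lam (r, b, d) a s' * g s') =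
    (\<Sum>r'\<in>{0..N}. \<Sum>b'\<in>{0..B}.
       prob_r N p r' * prob_b B lam b a b' * g (r', b', next_aoi Dmax (r, b, d) a))"
proof -
  let ?D = "next_aoi Dmax (r, b, d) a"
  have D: "?D \<in> {1..Dmax}" using next_aoi_in_range[OF assms] .
  have "(\<Sum>s'\<in>states N B Dmax. trans N B Dmax p lam (r, b, d) a s' * g s') =
      (\<Sum>r'\<in>{0..N}. \<Sum>b'\<in>{0..B}. \<Sum>d'\<in>{1..Dmax}.
         trans N B Dmax p lam (r, b, d) a (r', b', d') * g (r', b', d'))"
    unfolding states_def sum.cartesian_product by (simp add: case_prod_beta)
  also have "\<dots> = (\<Sum>r'\<in>{0..N}. \<Sum>b'\<in>{0..B}. \<Sum>d'\<in>{1..Dmax}.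
      if d' = ?D then prob_r N p r' * prob_b B lam b a b' * g (r', b', d') else 0)"
    by (intro sum.cong refl) (simp add: trans_def)
  also have "\<dots> = (\<Sum>r'\<in>{0..N}. \<Sum>b'\<in>{0..B}. prob_r N p r' * prob_b B lam b a b' * g (r', b', ?D))"
    using D by simp
  finally show ?thesis .
qed

lemma Qfun_mono_aoi:
  assumes "Dmax \<ge> 1" "\<forall>n\<in>{1..N}. 0 \<le> p n \<and> p n \<le> 1" "0 \<le> lam" "lam \<le> 1"
    and "mono_aoi N B Dmax V" and "d1 \<le> d2"
  shows "Qfun N B Dmax p lam \<mu> sref V (r, b, d1) a \<le> Qfun N B Dmax p lam \<mu> sref V (r, b, d2) a"
proof -
  let ?D1 = "next_aoi Dmax (r, b, d1) a" and ?D2 = "next_aoi Dmax (r, b, d2) a"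
  have D: "?D1 \<le> ?D2" "?D1 \<in> {1..Dmax}" "?D2 \<in> {1..Dmax}"
    using next_aoi_mono[OF assms(6)] next_aoi_in_range[OF assms(1)] by auto
  have cost: "cost Dmax (r, b, d1) a \<le> cost Dmax (r, b, d2) a"
    using D(1) by (simp add: cost_def mult_left_mono)
  have "(\<Sum>r'\<in>{0..N}. \<Sum>b'\<in>{0..B}. prob_r N p r' * prob_b B lam b a b' * (V (r', b', ?D1) - V sref))
     \<le> (\<Sum>r'\<in>{0..N}. \<Sum>b'\<in>{0..B}. prob_r N p r' * prob_b B lam b a b' * (V (r', b', ?D2) - V sref))"
  proof (intro sum_mono mult_left_mono)
    fix r' b' assume "r' \<in> {0..N}" "b' \<in> {0..B}"
    then show "V (r', b', ?D1) - V sref \<le> V (r', b', ?D2) - V sref"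
      using assms(5) D unfolding mono_aoi_def states_def by auto
    show "0 \<le> prob_r N p r' * prob_b B lam b a b'"
      using prob_r_nonneg[OF assms(2)] prob_b_nonneg[OF assms(3,4)] by simp
  qed
  then show ?thesis
    unfolding Qfun_def sum_trans_mult[OF assms(1)] using cost by simp
qed

lemma Qfun_transmit_indep_aoi:
  assumes "b \<ge> 1" "Dmax \<ge> 1"
  shows "Qfun N B Dmax p lam \<mu> sref V (r, b, d1) 1 = Qfun N B Dmax p lam \<mu> sref V (r, b, d2) 1"
  using next_aoi_transmit[OF assms] by (simp add: Qfun_def cost_def trans_def)

lemma Qfun_empty_buffer:
  "Qfun N B Dmax p lam \<mu> sref V (r, 0, d) 1 = Qfun N B Dmax p lam \<mu> sref V (r, 0, d) 0 + \<mu>"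
  using next_aoi_empty_buffer[of Dmax r d 1]
  by (simp add: Qfun_def cost_def trans_def prob_b_def ind_pos_def)

lemma rvi_snd:
  "snd (rvi N B Dmax p lam \<mu> sref i) = (\<lambda>s. fst (rvi N B Dmax p lam \<mu> sref i) s
      - fst (rvi N B Dmax p lam \<mu> sref i) sref)"
  by (cases i) (simp_all add: Let_def)

lemma rvi_fst_Suc:
  "fst (rvi N B Dmax p lam \<mu> sref (Suc i)) s =
     min (Qfun N B Dmax p lam \<mu> sref (fst (rvi N B Dmax p lam \<mu> sref i)) s 0)
         (Qfun N B Dmax p lam \<mu> sref (fst (rvi N B Dmax p lam \<mu> sref i)) s 1)"
  by (simp add: Let_def acts_def Qfun_def rvi_snd)

lemma rvi_mono_aoi:
  assumes "Dmax \<ge> 1" "\<forall>n\<in>{1..N}. 0 \<le> p n \<and> p n \<le> 1" "0 \<le> lam" "lam \<le> 1"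
  shows "mono_aoi N B Dmax (fst (rvi N B Dmax p lam \<mu> sref i))"
proof (induction i)
  case 0
  then show ?case by (simp add: mono_aoi_def)
next
  case (Suc i)
  show ?case
    unfolding rvi_fst_Suc mono_aoi_def
    by (blast intro: min.mono Qfun_mono_aoi[OF assms Suc.IH])
qed

lemma mono_aoi_limit:
  assumes "\<And>i. mono_aoi N B Dmax (f i)"
    and "\<forall>s\<in>states N B Dmax. (\<lambda>i. f i s) \<longlonglongrightarrow> V s"
  shows "mono_aoi N B Dmax V"
  unfolding mono_aoi_def
proof (intro allI impI)
  fix r b d1 d2
  assume s: "(r, b, d1) \<in> states N B Dmax" "(r, b, d2) \<in> states N B Dmax" "d1 \<le> d2"
  have "f i (r, b, d1) \<le> f i (r, b, d2)" for i
    using assms(1)[of i] s unfolding mono_aoi_def by blast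
  then show "V (r, b, d1) \<le> V (r, b, d2)"
    using assms(2) s by (intro LIMSEQ_le[of "\<lambda>i. f i (r, b, d1)" _ "\<lambda>i. f i (r, b, d2)"]) auto
qed

theorem theorem1:
  fixes N B Dmax :: nat and p :: "nat \<Rightarrow> real" and lam \<mu> :: real
    and sref :: state and V :: "state \<Rightarrow> real" and \<pi> :: "state \<Rightarrow> nat"
    and r b d d' :: nat
  assumes "N \<ge> 1" and "B \<ge> 1" and "Dmax \<ge> 2"
    and "\<forall>n\<in>{1..N}. 0 \<le> p n \<and> p n \<le> 1"
    and "0 \<le> lam" and "lam \<le> 1" and "\<mu> \<ge> 0"
    and "sref \<in> states N B Dmax"
    and "\<forall>s\<in>states N B Dmax. (\<lambda>i. fst (rvi N B Dmax p lam \<mu> sref i) s) \<longlonglongrightarrow> V s"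
    and "\<forall>s\<in>states N B Dmax. \<pi> s \<in> acts \<and>
           (\<forall>a\<in>acts. Qfun N B Dmax p lam \<mu> sref V s (\<pi> s) \<le> Qfun N B Dmax p lam \<mu> sref V s a)"
    and "(r, b, d) \<in> states N B Dmax" and "\<pi> (r, b, d) = 1"
    and "(r, b, d') \<in> states N B Dmax" and "d \<le> d'"
  shows "Qfun N B Dmax p lam \<mu> sref V (r, b, d') 1 \<le> Qfun N B Dmax p lam \<mu> sref V (r, b, d') 0"
proof -
  let ?Q = "Qfun N B Dmax p lam \<mu> sref V"
  have Dmax: "Dmax \<ge> 1" using assms(3) by simp
  have V_mono: "mono_aoi N B Dmax V"
    using mono_aoi_limit[OF rvi_mono_aoi[OF Dmax assms(4-6)] assms(9)] .
  have idle_mono: "?Q (r, b, d) 0 \<le> ?Q (r, b, d') 0"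
    using Qfun_mono_aoi[OF Dmax assms(4-6) V_mono assms(14)] .
  have transmit_opt: "?Q (r, b, d) 1 \<le> ?Q (r, b, d) 0"
    using assms(10-12) unfolding acts_def by (metis insertI1)
  show ?thesis
  proof (cases "b \<ge> 1")
    case True
    then show ?thesis
      using Qfun_transmit_indep_aoi[OF True Dmax, of N B p lam \<mu> sref V r d' d] transmit_opt idle_mono
      by linarith
  next
    case False
    then have "b = 0" by simp
    then have "\<mu> = 0"
      using Qfun_empty_buffer[of N B Dmax p lam \<mu> sref V r d] transmit_opt assms(7) by simp
    then show ?thesis
      using Qfun_empty_buffer[of N B Dmax p lam \<mu> sref V r d'] \<open>b = 0\<close> by simp
  qed
qed

end
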